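(* Let $\mathbf A$ be a residuated semigroup and $p$ a positive idempotent of $\mathbf A$. The following are equivalent: (1) $pa=ap$ for every $a\in A$; (2) for every $a\in A$, $pa=a$ if and only if $ap=a$; (3) for every $a\in A$, $p\backslash a=a$ if and only if $a/p=a$; (4) for every $a\in A$, $p\backslash a=a/p$; (5) $\{p\backslash a: a\in A\}=\{a/p: a\in A\}$.
   Context: A residuated semigroup is a structure $\langle A,\le,\cdot,\backslash,/\rangle$ where $\langle A,\le\rangle$ is a poset, $\langle A,\cdot\rangle$ is a semigroup (we write $xy$ for $x\cdot y$), and for all $x,y,z$: $xy\le z\iff x\le z/y\iff y\le x\backslash z$. An element $p$ is positive if $a\le pa$ and $a\le ap$ for all $a\in A$; it is idempotent if $pp=p$. *)

theory Defs
  imports Main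
begin

text \<open>A residuated semigroup on the type 'a: a partial order le, an associative
multiplication mult, and left/right residuals ldiv (x \ z) and rdiv (z / y),
satisfying  mult x y \<le> z  iff  x \<le> rdiv z y  iff  y \<le> ldiv x z.\<close>

definition residuated_semigroup ::
  "('a \<Rightarrow> 'a \<Rightarrow> bool) \<Rightarrow> ('a \<Rightarrow> 'a \<Rightarrow> 'a) \<Rightarrow> ('a \<Rightarrow> 'a \<Rightarrow> 'a) \<Rightarrow> ('a \<Rightarrow> 'a \<Rightarrow> 'a) \<Rightarrow> bool"
  where "residuated_semigroup le mult ldiv rdiv \<longleftrightarrow>
    partial_order_on UNIV {(x, y). le x y} \<and>
    (\<forall>x y z. mult (mult x y) z = mult x (mult y z)) \<and>
    (\<forall>x y z. (le (mult x y) z \<longleftrightarrow> le x (rdiv z y)) \<and>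
             (le (mult x y) z \<longleftrightarrow> le y (ldiv x z)))"

definition positive_elem :: "('a \<Rightarrow> 'a \<Rightarrow> bool) \<Rightarrow> ('a \<Rightarrow> 'a \<Rightarrow> 'a) \<Rightarrow> 'a \<Rightarrow> bool"
  where "positive_elem le mult p \<longleftrightarrow> (\<forall>a. le a (mult p a) \<and> le a (mult a p))"

definition idempotent_elem :: "('a \<Rightarrow> 'a \<Rightarrow> 'a) \<Rightarrow> 'a \<Rightarrow> bool"
  where "idempotent_elem mult p \<longleftrightarrow> mult p p = p"

end

theory Submission
  imports Defs
begin

text \<open>Left and right multiplication by p are closure operators, and the residuals
  p\a and a/p are the corresponding interior operators; each of these determines the
  other through its set of fixed points, which is also its range. Conditions (2), (3)
  and (5) therefore compare the same fixed-point sets in different guises. Commutation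
  follows from (2) because pa and ap are fixed by multiplication on both sides, and
  (4) follows from (3) because p\a and a/p then dominate each other.\<close>

locale residuated =
  fixes le :: "'a \<Rightarrow> 'a \<Rightarrow> bool" (infix "\<preceq>" 50)
    and mult :: "'a \<Rightarrow> 'a \<Rightarrow> 'a" (infixl "\<cdot>" 70)
    and ldiv rdiv :: "'a \<Rightarrow> 'a \<Rightarrow> 'a"
  assumes residuated_semigroup: "residuated_semigroup le mult ldiv rdiv"
begin

lemma order_refl: "x \<preceq> x"
  and order_trans: "x \<preceq> y \<Longrightarrow> y \<preceq> z \<Longrightarrow> x \<preceq> z"
  and order_antisym: "x \<preceq> y \<Longrightarrow> y \<preceq> x \<Longrightarrow> x = y"
  using residuated_semigroup
  unfolding residuated_semigroup_def partial_order_on_def preorder_on_def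
    refl_on_def trans_def antisym_def
  by blast+

lemma mult_assoc: "x \<cdot> y \<cdot> z = x \<cdot> (y \<cdot> z)"
  and le_rdiv_iff: "x \<preceq> rdiv z y \<longleftrightarrow> x \<cdot> y \<preceq> z"
  and le_ldiv_iff: "y \<preceq> ldiv x z \<longleftrightarrow> x \<cdot> y \<preceq> z"
  using residuated_semigroup unfolding residuated_semigroup_def by blast+

lemma eq_iff_same_lower_bounds: "(\<And>x. x \<preceq> a \<longleftrightarrow> x \<preceq> b) \<Longrightarrow> a = b"
  by (meson order_antisym order_refl)

lemma mult_ldiv_le: "x \<cdot> ldiv x z \<preceq> z"
  using le_ldiv_iff order_refl by blast

lemma rdiv_mult_le: "rdiv z y \<cdot> y \<preceq> z"
  using le_rdiv_iff order_refl by blast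

lemma ldiv_mono: "y \<preceq> z \<Longrightarrow> ldiv x y \<preceq> ldiv x z"
  by (meson le_ldiv_iff mult_ldiv_le order_trans)

lemma rdiv_mono: "y \<preceq> z \<Longrightarrow> rdiv y x \<preceq> rdiv z x"
  by (meson le_rdiv_iff rdiv_mult_le order_trans)

lemma ldiv_mult: "ldiv (x \<cdot> y) z = ldiv y (ldiv x z)"
  by (rule eq_iff_same_lower_bounds) (simp add: le_ldiv_iff mult_assoc)

lemma rdiv_mult: "rdiv z (x \<cdot> y) = rdiv (rdiv z y) x"
  by (rule eq_iff_same_lower_bounds) (simp add: le_rdiv_iff mult_assoc)

end

locale residuated_positive_idempotent = residuated +
  fixes p :: 'a
  assumes positive: "positive_elem le mult p"
    and idempotent: "idempotent_elem mult p"
begin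

lemma le_mult_left: "a \<preceq> p \<cdot> a"
  and le_mult_right: "a \<preceq> a \<cdot> p"
  using positive unfolding positive_elem_def by blast+

lemma mult_idem: "p \<cdot> p = p"
  using idempotent unfolding idempotent_elem_def .

lemma mult_left_idem: "p \<cdot> (p \<cdot> a) = p \<cdot> a"
  by (metis mult_assoc mult_idem)

lemma mult_right_idem: "a \<cdot> p \<cdot> p = a \<cdot> p"
  by (metis mult_assoc mult_idem)

lemma ldiv_le: "ldiv p a \<preceq> a"
  using le_mult_left mult_ldiv_le order_trans by blast

lemma rdiv_le: "rdiv a p \<preceq> a"
  using le_mult_right rdiv_mult_le order_trans by blast

lemma ldiv_idem: "ldiv p (ldiv p a) = ldiv p a"
  by (metis ldiv_mult mult_idem)

lemma rdiv_idem: "rdiv (rdiv a p) p = rdiv a p"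
  by (metis rdiv_mult mult_idem)

lemma ldiv_eq_self_iff: "ldiv p a = a \<longleftrightarrow> p \<cdot> a = a"
  by (metis le_ldiv_iff ldiv_le le_mult_left order_antisym order_refl)

lemma rdiv_eq_self_iff: "rdiv a p = a \<longleftrightarrow> a \<cdot> p = a"
  by (metis le_rdiv_iff rdiv_le le_mult_right order_antisym order_refl)

lemma range_ldiv: "range (ldiv p) = {a. ldiv p a = a}"
proof (intro set_eqI iffI)
  show "x \<in> {a. ldiv p a = a}" if "x \<in> range (ldiv p)" for x
    using that ldiv_idem by auto
  show "x \<in> range (ldiv p)" if "x \<in> {a. ldiv p a = a}" for x
    using that rangeI[of "ldiv p" x] by simp
qed

lemma range_rdiv: "range (\<lambda>a. rdiv a p) = {a. rdiv a p = a}"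
proof (intro set_eqI iffI)
  show "x \<in> {a. rdiv a p = a}" if "x \<in> range (\<lambda>a. rdiv a p)" for x
    using that rdiv_idem by auto
  show "x \<in> range (\<lambda>a. rdiv a p)" if "x \<in> {a. rdiv a p = a}" for x
    using that rangeI[of "\<lambda>a. rdiv a p" x] by simp
qed

lemma commute_iff_same_fixed_points:
  "(\<forall>a. p \<cdot> a = a \<cdot> p) \<longleftrightarrow> (\<forall>a. p \<cdot> a = a \<longleftrightarrow> a \<cdot> p = a)"
proof
  assume "\<forall>a. p \<cdot> a = a \<longleftrightarrow> a \<cdot> p = a"
  then have "p \<cdot> a \<cdot> p = p \<cdot> a" and "p \<cdot> (a \<cdot> p) = a \<cdot> p" for a
    using mult_left_idem mult_right_idem by metis+
  then show "\<forall>a. p \<cdot> a = a \<cdot> p"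
    by (metis mult_assoc)
qed metis

lemma residuals_same_fixed_points_iff_eq:
  "(\<forall>a. ldiv p a = a \<longleftrightarrow> rdiv a p = a) \<longleftrightarrow> (\<forall>a. ldiv p a = rdiv a p)"
proof
  assume fix_eq: "\<forall>a. ldiv p a = a \<longleftrightarrow> rdiv a p = a"
  show "\<forall>a. ldiv p a = rdiv a p"
  proof
    fix a
    have "ldiv p a = rdiv (ldiv p a) p" and "rdiv a p = ldiv p (rdiv a p)"
      using fix_eq ldiv_idem rdiv_idem by metis+
    then have "ldiv p a \<preceq> rdiv a p" and "rdiv a p \<preceq> ldiv p a"
      using rdiv_mono[OF ldiv_le] ldiv_mono[OF rdiv_le] by metis+
    then show "ldiv p a = rdiv a p"
      by (rule order_antisym)
  qed
qed simp

end

theorem proposition2p5: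
  fixes le :: "'a \<Rightarrow> 'a \<Rightarrow> bool" and mult ldiv rdiv :: "'a \<Rightarrow> 'a \<Rightarrow> 'a" and p :: 'a
  assumes "residuated_semigroup le mult ldiv rdiv"
    and "positive_elem le mult p"
    and "idempotent_elem mult p"
  defines "C1 \<equiv> (\<forall>a. mult p a = mult a p)"
    and "C2 \<equiv> (\<forall>a. mult p a = a \<longleftrightarrow> mult a p = a)"
    and "C3 \<equiv> (\<forall>a. ldiv p a = a \<longleftrightarrow> rdiv a p = a)"
    and "C4 \<equiv> (\<forall>a. ldiv p a = rdiv a p)"
    and "C5 \<equiv> (range (\<lambda>a. ldiv p a) = range (\<lambda>a. rdiv a p))"
  shows "(C1 \<longleftrightarrow> C2) \<and> (C2 \<longleftrightarrow> C3) \<and> (C3 \<longleftrightarrow> C4) \<and> (C4 \<longleftrightarrow> C5)"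
proof -
  interpret residuated_positive_idempotent le mult ldiv rdiv p
    using assms(1-3) by unfold_locales
  have "C1 \<longleftrightarrow> C2"
    unfolding C1_def C2_def by (rule commute_iff_same_fixed_points)
  moreover have "C2 \<longleftrightarrow> C3"
    unfolding C2_def C3_def by (simp add: ldiv_eq_self_iff rdiv_eq_self_iff)
  moreover have "C3 \<longleftrightarrow> C4"
    unfolding C3_def C4_def by (rule residuals_same_fixed_points_iff_eq)
  moreover have "C3 \<longleftrightarrow> C5"
    unfolding C3_def C5_def range_ldiv range_rdiv by auto
  ultimately show ?thesis
    by blast
qed

end
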